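(* Let $Z$ be a metric space, $I=[0,1]$, and $H:I\times I\to Z$ a function such that $H|_{I\times\{0,1\}}$ is continuous. Let $\{(a_i,b_i)\}_i$ be a collection of pairwise disjoint open intervals in $I$ such that $\operatorname{diam}\bigl(H([a_i,b_i]\times I)\bigr)\to0$. Suppose that $H$ is constant on $\{t\}\times I$ for every $t\notin\bigcup_i(a_i,b_i)$, and that $H$ is continuous on each $[a_i,b_i]\times I$. Then $H$ is continuous. *)

theory Defs
  imports "HOL-Analysis.Analysis"
begin

end

theory Submission
  imports Defs
begin

text \<open>
  Continuity at a point (t, s) with t inside some interval (a i, b i) is local.
  If t lies in no such interval, the fibre over t is a single point z. Near t, only the finitely
  many pieces whose image has diameter at least e/2 can carry a point far from z; on each of
  them uniform continuity keeps the fibres close to z. Every other fibre has diameter below e/2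
  and, by continuity of H on the bottom edge, starts close to z.
\<close>

lemma continuous_within_from_local_piece:
  assumes "continuous_on U f" "open S" "x \<in> S" "x \<in> T" "T \<inter> S \<subseteq> U"
  shows "continuous (at x within T) f"
proof -
  have "continuous (at x within U) f"
    using assms by (auto simp: continuous_on_eq_continuous_within)
  then have "continuous (at x within T \<inter> S) f"
    using assms(5) by (rule continuous_within_subset)
  moreover have "at x within T = at x within T \<inter> S"
    using assms(2,3) by (intro at_within_nhd[of x S]) auto
  ultimately show ?thesis by simp
qed

lemma eventually_close_to_constant_fibre:
  fixes H :: "'a::metric_space \<times> 'b::metric_space \<Rightarrow> 'z::metric_space"
  assumes cont: "continuous_on (A \<times> K) H" and "compact A" "compact K"
    and fibre: "\<forall>s\<in>K. H (t, s) = z" and "e > 0"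
  shows "\<forall>\<^sub>F t' in nhds t. t' \<in> A \<longrightarrow> (\<forall>s\<in>K. dist (H (t', s)) z < e)"
proof (cases "t \<in> A")
  case False
  have "\<forall>\<^sub>F t' in nhds t. t' \<in> - A"
    using False \<open>compact A\<close> by (intro eventually_nhds_in_open) (auto intro: compact_imp_closed)
  then show ?thesis by (rule eventually_mono) auto
next
  case True
  have "uniformly_continuous_on (A \<times> K) H"
    using assms by (intro compact_uniformly_continuous compact_Times)
  then obtain d where "d > 0" and d: "\<And>x x'. x \<in> A \<times> K \<Longrightarrow> x' \<in> A \<times> K \<Longrightarrow>
      dist x' x < d \<Longrightarrow> dist (H x') (H x) < e"
    unfolding uniformly_continuous_on_def using \<open>e > 0\<close> by metis
  have "\<forall>\<^sub>F t' in nhds t. dist t' t < d"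
    using \<open>d > 0\<close> eventually_nhds_metric by blast
  then show ?thesis
  proof (rule eventually_mono, intro impI ballI)
    fix t' s assume "dist t' t < d" "t' \<in> A" "s \<in> K"
    then have "dist (H (t', s)) (H (t, s)) < e"
      using True by (intro d) (auto simp: dist_Pair_Pair)
    then show "dist (H (t', s)) z < e" using fibre \<open>s \<in> K\<close> by simp
  qed
qed

lemma continuous_within_if_fibres_uniformly_close:
  fixes H :: "'a::metric_space \<times> 'b::metric_space \<Rightarrow> 'z::metric_space"
  assumes "\<And>e. e > 0 \<Longrightarrow>
    \<forall>\<^sub>F t' in nhds t. t' \<in> A \<longrightarrow> (\<forall>s'\<in>K. dist (H (t', s')) (H (t, s)) < e)"
  shows "continuous (at (t, s) within A \<times> K) H"
  unfolding continuous_within tendsto_iff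
proof (intro allI impI)
  fix e :: real assume "e > 0"
  have "filterlim fst (nhds t) (at (t, s) within A \<times> K)"
    using tendsto_fst[OF tendsto_ident_at[of "(t, s)"]] by simp
  from eventually_compose_filterlim[OF assms[OF \<open>e > 0\<close>] this]
  have "\<forall>\<^sub>F x in at (t, s) within A \<times> K.
      fst x \<in> A \<longrightarrow> (\<forall>s'\<in>K. dist (H (fst x, s')) (H (t, s)) < e)" .
  moreover have "\<forall>\<^sub>F x in at (t, s) within A \<times> K. x \<in> A \<times> K"
    by (simp add: eventually_at_filter)
  ultimately show "\<forall>\<^sub>F x in at (t, s) within A \<times> K. dist (H x) (H (t, s)) < e"
    by eventually_elim auto
qed

lemma fibre_dist_less:
  fixes H :: "real \<times> 'b::metric_space \<Rightarrow> 'z::metric_space"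
  assumes const_off: "t \<notin> (\<Union>i\<in>J. {a i<..<b i}) \<Longrightarrow> \<exists>z. \<forall>s\<in>K. H (t, s) = z"
    and cont_on: "\<And>i. i \<in> J \<Longrightarrow> continuous_on ({a i..b i} \<times> K) H"
    and small: "\<And>i. i \<in> J \<Longrightarrow> t \<in> {a i..b i} \<Longrightarrow> diameter (H ` ({a i..b i} \<times> K)) < e"
    and "compact K" "s \<in> K" "s' \<in> K" "e > 0"
  shows "dist (H (t, s)) (H (t, s')) < e"
proof (cases "t \<in> (\<Union>i\<in>J. {a i<..<b i})")
  case True
  then obtain i where i: "i \<in> J" "t \<in> {a i<..<b i}" by blast
  have "compact (H ` ({a i..b i} \<times> K))"
    using cont_on[OF i(1)] \<open>compact K\<close> by (intro compact_continuous_image compact_Times) auto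
  then have "dist (H (t, s)) (H (t, s')) \<le> diameter (H ` ({a i..b i} \<times> K))"
    using i \<open>s \<in> K\<close> \<open>s' \<in> K\<close> by (intro diameter_bounded_bound compact_imp_bounded) auto
  also have "\<dots> < e" using i by (intro small) auto
  finally show ?thesis .
next
  case False
  then obtain z where "\<forall>s\<in>K. H (t, s) = z" using const_off by blast
  then show ?thesis using \<open>s \<in> K\<close> \<open>s' \<in> K\<close> \<open>e > 0\<close> by simp
qed

lemma eventually_fibres_close_to_constant_fibre:
  fixes H :: "real \<times> real \<Rightarrow> 'z::metric_space"
  assumes cont_ends: "continuous_on ({0..1} \<times> {0, 1}) H"
    and diam_to_0: "\<And>e. e > 0 \<Longrightarrow>
                     finite {i \<in> J. diameter (H ` ({a i..b i} \<times> {0..1})) \<ge> e}"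
    and const_off: "\<And>t. t \<in> {0..1} \<Longrightarrow> t \<notin> (\<Union>i\<in>J. {a i<..<b i}) \<Longrightarrow>
                     \<exists>z. \<forall>s\<in>{0..1}. H (t, s) = z"
    and cont_on: "\<And>i. i \<in> J \<Longrightarrow> continuous_on ({a i..b i} \<times> {0..1}) H"
    and fibre: "\<forall>s\<in>{0..1}. H (t, s) = z" and "e > 0"
  shows "\<forall>\<^sub>F t' in nhds t. t' \<in> {0..1} \<longrightarrow> (\<forall>s'\<in>{0..1}. dist (H (t', s')) z < e)"
proof -
  define F where "F = {i \<in> J. diameter (H ` ({a i..b i} \<times> {0..1})) \<ge> e / 2}"
  have "finite F" using diam_to_0[of "e / 2"] \<open>e > 0\<close> by (simp add: F_def)
  have near_big_pieces: "\<forall>\<^sub>F t' in nhds t.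
      \<forall>i\<in>F. t' \<in> {a i..b i} \<longrightarrow> (\<forall>s'\<in>{0..1}. dist (H (t', s')) z < e)"
    using \<open>finite F\<close> fibre \<open>e > 0\<close>
    by (intro eventually_ball_finite ballI eventually_close_to_constant_fibre cont_on)
      (auto simp: F_def)
  have near_base: "\<forall>\<^sub>F t' in nhds t. t' \<in> {0..1} \<longrightarrow> (\<forall>s'\<in>{0}. dist (H (t', s')) z < e / 2)"
    using fibre \<open>e > 0\<close>
    by (intro eventually_close_to_constant_fibre continuous_on_subset[OF cont_ends]) auto
  from near_big_pieces near_base show ?thesis
  proof eventually_elim
    case (elim t')
    show ?case
    proof (intro impI ballI)
      fix s' assume "t' \<in> {0..1}" "s' \<in> {0..1::real}"
      show "dist (H (t', s')) z < e"
      proof (cases "\<exists>i\<in>F. t' \<in> {a i..b i}")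
        case True
        then show ?thesis using elim \<open>s' \<in> {0..1}\<close> by blast
      next
        case False
        then have "diameter (H ` ({a i..b i} \<times> {0..1})) < e / 2"
          if "i \<in> J" "t' \<in> {a i..b i}" for i
          using that by (auto simp: F_def not_le)
        then have "dist (H (t', s')) (H (t', 0)) < e / 2"
          using \<open>s' \<in> {0..1}\<close> \<open>e > 0\<close>
          by (intro fibre_dist_less[OF const_off[OF \<open>t' \<in> {0..1}\<close>] cont_on]) auto
        then show ?thesis
          using elim \<open>t' \<in> {0..1}\<close> dist_triangle[of "H (t', s')" z "H (t', 0)"] by auto
      qed
    qed
  qed
qed

theorem lemma2p7:
  fixes H :: "real \<times> real \<Rightarrow> 'z::metric_space"
    and J :: "'i set" and a b :: "'i \<Rightarrow> real"
  assumes cont_ends: "continuous_on ({0..1} \<times> {0, 1}) H"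
    and intervals: "\<And>i. i \<in> J \<Longrightarrow> 0 \<le> a i \<and> a i < b i \<and> b i \<le> 1"
    and disjoint: "\<And>i j. i \<in> J \<Longrightarrow> j \<in> J \<Longrightarrow> i \<noteq> j \<Longrightarrow>
                     {a i<..<b i} \<inter> {a j<..<b j} = {}"
    and diam_to_0: "\<And>e. e > 0 \<Longrightarrow>
                     finite {i \<in> J. diameter (H ` ({a i..b i} \<times> {0..1})) \<ge> e}"
    and const_off: "\<And>t. t \<in> {0..1} \<Longrightarrow> t \<notin> (\<Union>i\<in>J. {a i<..<b i}) \<Longrightarrow>
                     \<exists>z. \<forall>s\<in>{0..1}. H (t, s) = z"
    and cont_on: "\<And>i. i \<in> J \<Longrightarrow> continuous_on ({a i..b i} \<times> {0..1}) H"
  shows "continuous_on ({0..1} \<times> {0..1}) H"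
  unfolding continuous_on_eq_continuous_within
proof (intro ballI)
  fix x assume "x \<in> {0..1::real} \<times> {0..1::real}"
  then obtain t s where x: "x = (t, s)" and "t \<in> {0..1}" "s \<in> {0..1}" by blast
  show "continuous (at x within {0..1} \<times> {0..1}) H"
  proof (cases "t \<in> (\<Union>i\<in>J. {a i<..<b i})")
    case True
    then obtain i where "i \<in> J" "t \<in> {a i<..<b i}" by blast
    have "open ({a i<..<b i} \<times> (UNIV :: real set))" by (simp add: open_Times)
    then show ?thesis
      using x \<open>t \<in> {a i<..<b i}\<close> \<open>t \<in> {0..1}\<close> \<open>s \<in> {0..1}\<close>
      by (intro continuous_within_from_local_piece[OF cont_on[OF \<open>i \<in> J\<close>]]) auto
  next
    case False
    then obtain z where fibre: "\<forall>s\<in>{0..1}. H (t, s) = z"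
      using const_off \<open>t \<in> {0..1}\<close> by blast
    have "\<forall>\<^sub>F t' in nhds t. t' \<in> {0..1} \<longrightarrow> (\<forall>s'\<in>{0..1}. dist (H (t', s')) (H (t, s)) < e)"
      if "e > 0" for e
      using eventually_fibres_close_to_constant_fibre[OF cont_ends diam_to_0 const_off cont_on fibre that]
        fibre \<open>s \<in> {0..1}\<close> by simp
    then show ?thesis
      unfolding x by (rule continuous_within_if_fibres_uniformly_close)
  qed
qed

end
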